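(* The set of supports of the codewords of weight $6$ of the extended binary Hamming code of length $16$, viewed as $6$-element subsets of $\{1,\dots,16\}$, is a completely regular code in the Johnson graph $J(16,6)$ with covering radius $2$.
   Context: The Johnson graph $J(n,k)$ has as vertices the $k$-element subsets of $\{1,\dots,n\}$, adjacent iff they meet in $k-1$ elements. The extended binary Hamming code of length $16$ is the $[16,11,4]$ binary code obtained from the binary Hamming code of length $15$ by adding an overall parity bit. For a nonempty vertex set $C$ of a connected regular graph, $C_i$ is the set of vertices at distance exactly $i$ from $C$, the covering radius is the largest $i$ with $C_i\neq\emptyset$, and $C$ is completely regular if there are numbers $\gamma_i,\alpha_i,\beta_i$ such that every vertex of $C_i$ has exactly $\gamma_i$ neighbours in $C_{i-1}$, $\alpha_i$ in $C_i$, $\beta_i$ in $C_{i+1}$, for all $i$. *)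

theory Defs
  imports Main
begin

fun walk :: "('a \<Rightarrow> 'a \<Rightarrow> bool) \<Rightarrow> nat \<Rightarrow> 'a \<Rightarrow> 'a \<Rightarrow> bool" where
  "walk E 0 x y = (x = y)"
| "walk E (Suc n) x y = (\<exists>z. E x z \<and> walk E n z y)"

definition set_dist :: "('a \<Rightarrow> 'a \<Rightarrow> bool) \<Rightarrow> 'a set \<Rightarrow> 'a \<Rightarrow> nat" where
  "set_dist E C x = (LEAST n. \<exists>c\<in>C. walk E n x c)"

definition dist_layer :: "'a set \<Rightarrow> ('a \<Rightarrow> 'a \<Rightarrow> bool) \<Rightarrow> 'a set \<Rightarrow> nat \<Rightarrow> 'a set" where
  "dist_layer V E C i = {x \<in> V. set_dist E C x = i}"

definition covering_radius :: "'a set \<Rightarrow> ('a \<Rightarrow> 'a \<Rightarrow> bool) \<Rightarrow> 'a set \<Rightarrow> nat" where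
  "covering_radius V E C = (GREATEST i. dist_layer V E C i \<noteq> {})"

text \<open>Completely regular code. The neighbour count into C_{i-1} is taken to be over
  the empty set when i = 0 (condition Suc d = i).\<close>
definition completely_regular :: "'a set \<Rightarrow> ('a \<Rightarrow> 'a \<Rightarrow> bool) \<Rightarrow> 'a set \<Rightarrow> bool" where
  "completely_regular V E C \<longleftrightarrow> C \<noteq> {} \<and> C \<subseteq> V \<and>
     (\<exists>\<gamma> \<alpha> \<beta> :: nat \<Rightarrow> nat. \<forall>i. \<forall>x \<in> dist_layer V E C i.
        card {y \<in> V. E x y \<and> Suc (set_dist E C y) = i} = \<gamma> i \<and>
        card {y \<in> V. E x y \<and> set_dist E C y = i} = \<alpha> i \<and>
        card {y \<in> V. E x y \<and> set_dist E C y = Suc i} = \<beta> i)"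

definition johnson_vertices :: "nat \<Rightarrow> nat \<Rightarrow> nat set set" where
  "johnson_vertices n k = {A. A \<subseteq> {1..n} \<and> card A = k}"

definition johnson_adj :: "nat \<Rightarrow> nat \<Rightarrow> nat set \<Rightarrow> nat set \<Rightarrow> bool" where
  "johnson_adj n k A B \<longleftrightarrow> A \<in> johnson_vertices n k \<and> B \<in> johnson_vertices n k \<and>
     card (A \<inter> B) = k - 1"

text \<open>Binary words of length 15 / 16 are identified with their supports (subsets of
  {1..15} / {1..16}). The Hamming code of length 15 has parity-check matrix whose
  i-th column is the binary expansion of i (i = 1..15): a word lies in the code iff for
  every bit position j < 4 an even number of its support elements have bit j set.\<close>
definition hamming15 :: "nat set \<Rightarrow> bool" where
  "hamming15 S \<longleftrightarrow> S \<subseteq> {1..15} \<and> (\<forall>j<4. even (card {i \<in> S. odd (i div 2 ^ j)}))"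

text \<open>Extended code: coordinate 16 is the overall parity bit.\<close>
definition ext_hamming16 :: "nat set \<Rightarrow> bool" where
  "ext_hamming16 S \<longleftrightarrow> S \<subseteq> {1..16} \<and> hamming15 (S - {16}) \<and>
     (16 \<in> S \<longleftrightarrow> odd (card (S - {16})))"

definition weight6_supports :: "nat set set" where
  "weight6_supports = {S. ext_hamming16 S \<and> card S = 6}"

end

theory Submission
  imports Defs "HOL-Library.Z2" "HOL-Library.Function_Algebras"
begin

(* Identify {1..16} with F_2^4 by sending i to its binary expansion, 16 going to 0. A 6-set is
  then the support of a codeword iff its elements sum to 0 (for weight 6 the parity bit is
  automatic). For a 6-set X with sum S say that X has level 0 if S = 0, level 2 if X is invariant
  under translation by S (a union of three cosets of {0, S}), and level 1 otherwise. A neighbour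
  of X in J(16,6) exchanges some a in X for some b outside X, which changes the sum to S + a + b.
  Counting such exchanges shows that the number of neighbours of each level depends only on the
  level of X: 0/60/0 from level 0, 4/50/6 from level 1 and 0/48/12 from level 2. Hence the level
  is the distance from the code and these numbers are its intersection numbers. The two
  ingredients of the count are that a 6-set with S <> 0 contains a pair {z, z + S} (project
  along S onto a coordinate hyperplane: the six images and the two missing points of the
  hyperplane would both sum to 0), and that a 4-set with zero sum is invariant under exactly
  three nonzero translations. *)

section \<open>Distance layers of a graph given by a level function\<close>

lemma walk_level_bound:
  assumes "\<And>x y. E x y \<Longrightarrow> f x \<le> Suc (f y)"
  shows "walk E n x y \<Longrightarrow> f x \<le> n + f y"
proof (induction n arbitrary: x)
  case (Suc n)
  then obtain z where "E x z" "walk E n z y"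
    by auto
  then show ?case
    using Suc.IH assms by fastforce
qed simp

lemma walk_to_level_0:
  assumes "\<And>x y. E x y \<Longrightarrow> y \<in> V"
    and "\<And>x. x \<in> V \<Longrightarrow> 0 < f x \<Longrightarrow> \<exists>y. E x y \<and> Suc (f y) = f x"
  shows "x \<in> V \<Longrightarrow> \<exists>c\<in>V. f c = 0 \<and> walk E (f x) x c"
proof (induction "f x" arbitrary: x)
  case 0
  then show ?case
    by force
next
  case (Suc n)
  then obtain y where "E x y" "Suc (f y) = f x"
    using assms(2) by (metis zero_less_Suc)
  moreover from this obtain c where "c \<in> V" "f c = 0" "walk E (f y) y c"
    using Suc assms(1) by (metis Suc_inject)
  ultimately show ?case
    by (metis walk.simps(2))
qed

lemma set_dist_eq_level:
  assumes "\<And>x y. E x y \<Longrightarrow> y \<in> V"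
    and "\<And>x y. E x y \<Longrightarrow> f x \<le> Suc (f y)"
    and "\<And>x. x \<in> V \<Longrightarrow> 0 < f x \<Longrightarrow> \<exists>y. E x y \<and> Suc (f y) = f x"
    and "x \<in> V"
  shows "set_dist E {c \<in> V. f c = 0} x = f x"
  unfolding set_dist_def
proof (rule Least_equality)
  obtain c where "c \<in> V" "f c = 0" "walk E (f x) x c"
    using walk_to_level_0[of E V f x] assms(1,3,4) by blast
  then show "\<exists>c\<in>{c \<in> V. f c = 0}. walk E (f x) x c"
    by blast
next
  fix n
  assume "\<exists>c\<in>{c \<in> V. f c = 0}. walk E n x c"
  then obtain c where "f c = 0" "walk E n x c"
    by blast
  then show "f x \<le> n"
    using walk_level_bound[of E f n x c] assms(2) by simp
qed

lemma completely_regular_by_level: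
  assumes "C \<noteq> {}" "C \<subseteq> V"
    and dist: "\<And>x. x \<in> V \<Longrightarrow> set_dist E C x = f x"
    and counts: "\<And>x c. x \<in> V \<Longrightarrow> card {y \<in> V. E x y \<and> f y = c} = T (f x) c"
  shows "completely_regular V E C"
  unfolding completely_regular_def
proof (intro conjI exI allI ballI)
  fix i x
  assume "x \<in> dist_layer V E C i"
  then have x: "x \<in> V" "f x = i"
    using dist by (auto simp: dist_layer_def)
  have layer: "{y \<in> V. E x y \<and> P (set_dist E C y)} = {y \<in> V. E x y \<and> P (f y)}" for P
    using dist by auto
  show "card {y \<in> V. E x y \<and> set_dist E C y = i} = T i i"
    using layer[of "\<lambda>n. n = i"] counts[OF x(1)] x(2) by simp
  show "card {y \<in> V. E x y \<and> set_dist E C y = Suc i} = T i (Suc i)"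
    using layer[of "\<lambda>n. n = Suc i"] counts[OF x(1)] x(2) by simp
  show "card {y \<in> V. E x y \<and> Suc (set_dist E C y) = i} = (if i = 0 then 0 else T i (i - 1))"
  proof (cases i)
    case (Suc k)
    then have "{y \<in> V. E x y \<and> Suc (f y) = i} = {y \<in> V. E x y \<and> f y = k}"
      by auto
    then show ?thesis
      using layer[of "\<lambda>n. Suc n = i"] counts[OF x(1), of k] x(2) Suc by simp
  qed simp
qed (use assms in auto)

lemma covering_radius_by_level:
  assumes "\<And>x. x \<in> V \<Longrightarrow> set_dist E C x = f x"
    and "\<And>x. x \<in> V \<Longrightarrow> f x \<le> r" and "x \<in> V" "f x = r"
  shows "covering_radius V E C = r"
  unfolding covering_radius_def
proof (rule Greatest_equality)
  show "dist_layer V E C r \<noteq> {}"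
    using assms by (auto simp: dist_layer_def)
  show "i \<le> r" if "dist_layer V E C i \<noteq> {}" for i
    using that assms(1,2) by (auto simp: dist_layer_def)
qed

section \<open>Exchanges and the Johnson graph\<close>

definition exchange :: "'a set \<Rightarrow> 'a \<Rightarrow> 'a \<Rightarrow> 'a set" where
  "exchange X a b = insert b (X - {a})"

lemma exchange_inject:
  assumes "a \<in> X" "b \<notin> X" "a' \<in> X" "b' \<notin> X" "exchange X a b = exchange X a' b'"
  shows "a = a' \<and> b = b'"
proof
  show "b = b'"
    using assms unfolding exchange_def by (metis DiffD1 insertE insertI1)
  have "a \<notin> exchange X a b" "a \<noteq> a' \<Longrightarrow> a \<in> exchange X a' b'"
    using assms(1,2) by (auto simp: exchange_def)
  then show "a = a'"
    using assms(5) by auto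
qed

lemma card_exchange:
  assumes "finite X" "a \<in> X" "b \<notin> X"
  shows "card (exchange X a b) = card X"
proof -
  have "card (exchange X a b) = Suc (card (X - {a}))"
    using assms by (simp add: exchange_def)
  also have "\<dots> = card X"
    using card.remove[OF assms(1,2)] by simp
  finally show ?thesis .
qed

lemma johnson_adj_imp_exchange:
  assumes x: "x \<in> johnson_vertices n k" and adj: "johnson_adj n k x y" and "0 < k"
  shows "\<exists>a\<in>x. \<exists>b\<in>{1..n} - x. y = exchange x a b"
proof -
  have y: "y \<in> johnson_vertices n k" and xy: "card (x \<inter> y) = k - 1"
    using adj by (simp_all add: johnson_adj_def)
  have "finite x" "finite y"
    using x y finite_subset[of _ "{1..n}"] by (auto simp: johnson_vertices_def)
  have "card (x - y) = 1" "card (y - x) = 1"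
    using x y xy \<open>finite x\<close> \<open>finite y\<close> \<open>0 < k\<close>
    by (simp_all add: card_Diff_subset_Int johnson_vertices_def Int_commute)
  then obtain a b where a: "x - y = {a}" and b: "y - x = {b}"
    by (meson card_1_singletonE)
  have "y = exchange x a b"
    using a b unfolding exchange_def by blast
  moreover have "a \<in> x" "b \<in> {1..n} - x"
    using a b y by (auto simp: johnson_vertices_def)
  ultimately show ?thesis
    by blast
qed

lemma johnson_adj_exchange:
  assumes x: "x \<in> johnson_vertices n k" and a: "a \<in> x" and b: "b \<in> {1..n} - x" and "0 < k"
  shows "johnson_adj n k x (exchange x a b)"
proof -
  have "finite x"
    using x finite_subset[of _ "{1..n}"] by (auto simp: johnson_vertices_def)
  have "x \<inter> exchange x a b = x - {a}"
    using b by (auto simp: exchange_def)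
  then have "card (x \<inter> exchange x a b) = k - 1"
    using x a \<open>finite x\<close> by (simp add: johnson_vertices_def)
  moreover have "exchange x a b \<in> johnson_vertices n k"
    using x a b card_exchange[OF \<open>finite x\<close> a] by (auto simp: johnson_vertices_def exchange_def)
  ultimately show ?thesis
    using x by (simp add: johnson_adj_def)
qed

lemma johnson_adj_iff_exchange:
  assumes "x \<in> johnson_vertices n k" "0 < k"
  shows "johnson_adj n k x y \<longleftrightarrow> (\<exists>a\<in>x. \<exists>b\<in>{1..n} - x. y = exchange x a b)"
proof
  show "\<exists>a\<in>x. \<exists>b\<in>{1..n} - x. y = exchange x a b" if "johnson_adj n k x y"
    using johnson_adj_imp_exchange[OF assms(1) that assms(2)] .
  show "johnson_adj n k x y" if "\<exists>a\<in>x. \<exists>b\<in>{1..n} - x. y = exchange x a b"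
    using that johnson_adj_exchange[OF assms(1) _ _ assms(2)] by blast
qed

lemma card_johnson_neighbours:
  assumes x: "x \<in> johnson_vertices n k" and "0 < k"
  shows "card {y \<in> johnson_vertices n k. johnson_adj n k x y \<and> P y}
       = card {(a, b) \<in> x \<times> ({1..n} - x). P (exchange x a b)}"
proof -
  let ?ex = "\<lambda>(a, b). exchange x a b"
  let ?pairs = "{(a, b) \<in> x \<times> ({1..n} - x). P (exchange x a b)}"
  have "{y \<in> johnson_vertices n k. johnson_adj n k x y \<and> P y} = {y. johnson_adj n k x y \<and> P y}"
    by (auto simp: johnson_adj_def)
  also have "\<dots> = ?ex ` ?pairs"
    unfolding johnson_adj_iff_exchange[OF assms] by fastforce
  finally have "{y \<in> johnson_vertices n k. johnson_adj n k x y \<and> P y} = ?ex ` ?pairs" .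
  moreover have "inj_on ?ex ?pairs"
    by (rule inj_onI) (auto dest: exchange_inject)
  ultimately show ?thesis
    by (simp add: card_image)
qed

lemma card_exchanges_transfer:
  assumes f: "bij_betw f A B" and x: "x \<subseteq> A"
  shows "card {(a, b) \<in> x \<times> (A - x). P (f ` exchange x a b)}
       = card {(a, b) \<in> f ` x \<times> (B - f ` x). P (exchange (f ` x) a b)}"
proof -
  have inj: "inj_on f A"
    using f by (rule bij_betw_imp_inj_on)
  have image: "f ` exchange x a b = exchange (f ` x) (f a) (f b)" if "a \<in> x" "b \<in> A" for a b
    using that x inj_on_image_set_diff[OF inj, of x "{a}"] by (auto simp: exchange_def)
  let ?L = "{(a, b) \<in> x \<times> (A - x). P (f ` exchange x a b)}"
  have "map_prod f f ` ?L = {(a, b) \<in> f ` x \<times> (B - f ` x). P (exchange (f ` x) a b)}"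
  proof (intro equalityI subsetI)
    fix q
    assume "q \<in> map_prod f f ` ?L"
    then obtain a b where "a \<in> x" "b \<in> A - x" "P (f ` exchange x a b)" "q = (f a, f b)"
      by auto
    then show "q \<in> {(a, b) \<in> f ` x \<times> (B - f ` x). P (exchange (f ` x) a b)}"
      using image x f inj_on_image_mem_iff[OF inj, of b x] by (auto simp: bij_betw_def)
  next
    fix q
    assume "q \<in> {(a, b) \<in> f ` x \<times> (B - f ` x). P (exchange (f ` x) a b)}"
    then obtain a b where ab: "a \<in> x" "b \<in> A" "f b \<notin> f ` x"
        and P: "P (exchange (f ` x) (f a) (f b))" and q: "q = (f a, f b)"
      using f by (auto simp: bij_betw_def)
    have "(a, b) \<in> ?L"
      using ab P image[OF ab(1,2)] by auto
    then show "q \<in> map_prod f f ` ?L"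
      unfolding q by (rule image_eqI[rotated]) simp
  qed
  moreover have "inj_on (map_prod f f) ?L"
    by (rule inj_on_subset[OF map_prod_inj_on[OF inj inj]]) (use x in auto)
  ultimately show ?thesis
    by (simp flip: card_image)
qed

lemma finite_johnson_vertices: "finite (johnson_vertices n k)"
  by (rule finite_subset[of _ "Pow {1..n}"]) (auto simp: johnson_vertices_def)

lemma johnson_adj_imp_vertex: "johnson_adj n k x y \<Longrightarrow> y \<in> johnson_vertices n k"
  by (simp add: johnson_adj_def)

section \<open>Boolean vectors and the space F_2^4\<close>

type_synonym bvec = "nat \<Rightarrow> bit"

lemma bit_add_self [simp]: "(b::bit) + b = 0"
  by (cases b) simp_all

lemma bvec_add_self [simp]: "(x::bvec) + x = 0"
  by (simp add: fun_eq_iff)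

lemma bvec_add_self_left [simp]: "(x::bvec) + (x + y) = y"
  by (simp flip: add.assoc)

lemma bvec_add_eq_0_iff: "(x::bvec) + y = 0 \<longleftrightarrow> x = y"
  by (metis add_right_cancel bvec_add_self)

lemma sum_fun_apply: "(\<Sum>i\<in>A. f i) k = (\<Sum>i\<in>A. f i k)"
  by (induction A rule: infinite_finite_induct) auto

(* Writing an equation u = w as is_zero (u + w) lets simp decide it with add_ac: the summands
  get sorted, so equal ones become adjacent and cancel by bvec_add_self_left. *)
definition is_zero :: "bvec \<Rightarrow> bool" where
  "is_zero u \<longleftrightarrow> u = 0"

lemma is_zero_0 [simp]: "is_zero 0"
  by (simp add: is_zero_def)

lemma bvec_eq_iff_is_zero: "(u::bvec) = w \<longleftrightarrow> is_zero (u + w)"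
  by (metis add_right_cancel bvec_add_self is_zero_def)

lemmas bvec_normalise = bvec_eq_iff_is_zero add_ac

lemma bvec_diff [simp]: "(x::bvec) - y = x + y"
  by (rule ext) simp

definition F2_4 :: "bvec set" where
  "F2_4 = {w. \<forall>j\<ge>4. w j = 0}"

lemma F2_4_add: "x \<in> F2_4 \<Longrightarrow> y \<in> F2_4 \<Longrightarrow> x + y \<in> F2_4"
  by (simp add: F2_4_def)

lemma F2_4_sum: "A \<subseteq> F2_4 \<Longrightarrow> \<Sum>A \<in> F2_4"
  by (induction A rule: infinite_finite_induct) (auto simp: F2_4_def)

(* Column i of the parity-check matrix of the Hamming code of length 15; the parity
  coordinate 16 goes to 0. *)
definition binary_vec :: "nat \<Rightarrow> bvec" where
  "binary_vec i = (\<lambda>j. if j < 4 \<and> odd (i div 2 ^ j) then 1 else 0)"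

definition binary_value :: "bvec \<Rightarrow> nat" where
  "binary_value w = (\<Sum>j<4. if w j = 1 then 2 ^ j else 0)"

lemma less_4_cases: "j < (4::nat) \<Longrightarrow> j = 0 \<or> j = 1 \<or> j = 2 \<or> j = 3"
  by linarith

lemma lessThan_4: "{..<4::nat} = {0, 1, 2, 3}"
  by auto

lemma atLeastAtMost_1_16: "{1..16::nat} = {1, 2, 3, 4, 5, 6, 7, 8, 9, 10, 11, 12, 13, 14, 15, 16}"
  by (simp add: atLeastAtMost_upt numeral_eq_Suc upt_rec)

lemma binary_value_binary_vec: "i \<in> {1..16} \<Longrightarrow> binary_value (binary_vec i) = i mod 16"
  unfolding atLeastAtMost_1_16 by (auto simp: binary_value_def binary_vec_def lessThan_4)

lemma binary_vec_surj:
  assumes "w \<in> F2_4"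
  shows "\<exists>i\<in>{1..16}. binary_vec i = w"
proof -
  have high: "w j = 0" if "4 \<le> j" for j
    using assms that by (simp add: F2_4_def)
  let ?i = "if binary_value w = 0 then 16 else binary_value w"
  have v: "binary_value w = (if w 0 = 1 then 1 else 0) + (if w 1 = 1 then 2 else 0)
      + (if w 2 = 1 then 4 else 0) + (if w 3 = 1 then 8 else 0)"
    by (simp add: binary_value_def lessThan_4)
  have "binary_value w \<le> 15"
    unfolding v by simp
  then have "?i \<in> {1..16}"
    by simp
  moreover have "binary_vec ?i j = w j" for j
  proof (cases "j < 4")
    case True
    then show ?thesis
      unfolding v binary_vec_def using less_4_cases[OF True]
      by (elim disjE) (cases "w 0"; cases "w 1"; cases "w 2"; cases "w 3"; simp)+
  qed (simp add: binary_vec_def high)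
  ultimately show ?thesis
    by blast
qed

lemma bij_betw_binary_vec: "bij_betw binary_vec {1..16} F2_4"
  unfolding bij_betw_def
proof
  show "inj_on binary_vec {1..16}"
  proof (rule inj_onI)
    fix i k :: nat
    assume i: "i \<in> {1..16}" and k: "k \<in> {1..16}" and "binary_vec i = binary_vec k"
    then have "i mod 16 = k mod 16"
      using binary_value_binary_vec by metis
    with i k show "i = k"
      by (cases "i = 16"; cases "k = 16") auto
  qed
  show "binary_vec ` {1..16} = F2_4"
  proof
    show "binary_vec ` {1..16} \<subseteq> F2_4"
      by (auto simp: F2_4_def binary_vec_def)
    show "F2_4 \<subseteq> binary_vec ` {1..16}"
      using binary_vec_surj by blast
  qed
qed

lemma of_nat_bit_eq_0_iff: "(of_nat n :: bit) = 0 \<longleftrightarrow> even n"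
  by (induction n) auto

lemma sum_binary_vec_eq_0_iff:
  assumes "finite x"
  shows "(\<Sum>i\<in>x. binary_vec i) = 0 \<longleftrightarrow> (\<forall>j<4. even (card {i\<in>x. odd (i div 2 ^ j)}))"
proof -
  have "(\<Sum>i\<in>x. binary_vec i) j = of_nat (card {i\<in>x. j < 4 \<and> odd (i div 2 ^ j)})" for j
  proof -
    have "(\<Sum>i\<in>x. binary_vec i) j = (\<Sum>i\<in>x. of_bool (j < 4 \<and> odd (i div 2 ^ j)))"
      by (simp only: sum_fun_apply binary_vec_def of_bool_def)
    then show ?thesis
      using assms by (simp add: Int_def conj_commute)
  qed
  then have coord: "(\<Sum>i\<in>x. binary_vec i) j = 0 \<longleftrightarrow>
      (j < 4 \<longrightarrow> even (card {i\<in>x. odd (i div 2 ^ j)}))" for j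
    by (cases "j < 4") (simp_all add: of_nat_bit_eq_0_iff)
  have "(\<Sum>i\<in>x. binary_vec i) = 0 \<longleftrightarrow> (\<forall>j. (\<Sum>i\<in>x. binary_vec i) j = 0)"
    by (simp only: fun_eq_iff zero_fun_apply)
  also have "\<dots> \<longleftrightarrow> (\<forall>j<4. even (card {i\<in>x. odd (i div 2 ^ j)}))"
    by (simp only: coord)
  finally show ?thesis .
qed

lemma even_16_div_pow2:
  assumes "j < 4"
  shows "even ((16::nat) div 2 ^ j)"
  using less_4_cases[OF assms] by (elim disjE) simp_all

lemma weight6_supports_eq:
  "weight6_supports = {x \<in> johnson_vertices 16 6. (\<Sum>i\<in>x. binary_vec i) = 0}"
proof -
  have code: "x \<in> weight6_supports \<longleftrightarrow> (\<Sum>i\<in>x. binary_vec i) = 0"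
    if x: "x \<subseteq> {1..16}" "card x = 6" for x
  proof -
    have "finite x"
      using x(1) finite_subset by blast
    have same: "{i\<in>x - {16}. odd (i div 2 ^ j)} = {i\<in>x. odd (i div 2 ^ j)}" if "j < 4" for j
      using even_16_div_pow2[OF that] by auto
    have "x - {16} \<subseteq> {1..15}"
      using x(1) by auto
    then have "hamming15 (x - {16}) \<longleftrightarrow> (\<forall>j<4. even (card {i\<in>x. odd (i div 2 ^ j)}))"
      unfolding hamming15_def using same by simp
    also have "\<dots> \<longleftrightarrow> (\<Sum>i\<in>x. binary_vec i) = 0"
      using sum_binary_vec_eq_0_iff[OF \<open>finite x\<close>] by simp
    finally have "hamming15 (x - {16}) \<longleftrightarrow> (\<Sum>i\<in>x. binary_vec i) = 0" .
    moreover have "16 \<in> x \<longleftrightarrow> odd (card (x - {16}))"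
      using x(2) \<open>finite x\<close> by (cases "16 \<in> x") auto
    ultimately show ?thesis
      using x unfolding weight6_supports_def ext_hamming16_def by blast
  qed
  have "x \<subseteq> {1..16} \<and> card x = 6" if "x \<in> weight6_supports" for x
    using that by (simp add: weight6_supports_def ext_hamming16_def)
  then show ?thesis
    using code unfolding johnson_vertices_def by blast
qed

lemma card_F2_4: "card F2_4 = 16"
  using bij_betw_same_card[OF bij_betw_binary_vec] by simp

lemma finite_F2_4: "finite F2_4"
  using card_F2_4 card_ge_0_finite[of F2_4] by simp

lemma card_filter_1_16: "card {i \<in> {1..16::nat}. P i} = length (filter P [1..<17])"
proof -
  have "{i \<in> {1..16::nat}. P i} = set (filter P [1..<17])"
    by auto
  moreover have "card (set (filter P [1..<17])) = length (filter P [1..<17::nat])"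
    by (rule distinct_card) simp
  ultimately show ?thesis
    by simp
qed

lemma upt_1_17: "[1..<17] = [1, 2, 3, 4, 5, 6, 7, 8, 9, 10, 11, 12, 13, 14, 15, 16::nat]"
  by (simp add: numeral_eq_Suc upt_rec)

lemma F2_4_hyperplane_eq_image:
  assumes "j < 4"
  shows "{w \<in> F2_4. w j = 0} = binary_vec ` {i \<in> {1..16}. even (i div 2 ^ j)}"
proof (intro equalityI subsetI)
  fix w
  assume w: "w \<in> {w \<in> F2_4. w j = 0}"
  then obtain i where "i \<in> {1..16}" "w = binary_vec i"
    using bij_betw_binary_vec unfolding bij_betw_def by blast
  with w assms show "w \<in> binary_vec ` {i \<in> {1..16}. even (i div 2 ^ j)}"
    by (auto simp: binary_vec_def split: if_splits)
next
  fix w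
  assume "w \<in> binary_vec ` {i \<in> {1..16}. even (i div 2 ^ j)}"
  then show "w \<in> {w \<in> F2_4. w j = 0}"
    using bij_betw_binary_vec assms by (auto simp: bij_betw_def binary_vec_def)
qed

lemma F2_4_hyperplane:
  assumes j: "j < 4"
  shows "card {w \<in> F2_4. w j = 0} = 8" "\<Sum>{w \<in> F2_4. w j = 0} = 0"
proof -
  let ?I = "{i \<in> {1..16::nat}. even (i div 2 ^ j)}"
  have inj: "inj_on binary_vec ?I"
    using bij_betw_imp_inj_on[OF bij_betw_binary_vec] by (rule inj_on_subset) auto
  have "card ?I = 8"
    using less_4_cases[OF j] by (elim disjE) (simp_all only: card_filter_1_16 upt_1_17, simp_all)
  then show "card {w \<in> F2_4. w j = 0} = 8"
    unfolding F2_4_hyperplane_eq_image[OF j] card_image[OF inj] .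
  have "even (card {i \<in> ?I. odd (i div 2 ^ k)})" if k: "k < 4" for k
  proof -
    have "{i \<in> ?I. odd (i div 2 ^ k)} = {i \<in> {1..16::nat}. even (i div 2 ^ j) \<and> odd (i div 2 ^ k)}"
      by auto
    then show ?thesis
      using less_4_cases[OF j] less_4_cases[OF k]
      by (elim disjE) (simp_all only: card_filter_1_16 upt_1_17, simp_all)
  qed
  then have "(\<Sum>i\<in>?I. binary_vec i) = 0"
    by (simp add: sum_binary_vec_eq_0_iff)
  then show "\<Sum>{w \<in> F2_4. w j = 0} = 0"
    unfolding F2_4_hyperplane_eq_image[OF j] sum.reindex[OF inj] by simp
qed

lemma F2_4_nonzero_coordinate:
  assumes "S \<in> F2_4" "S \<noteq> 0"
  obtains j where "j < 4" "S j = 1"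
proof -
  obtain j where "S j \<noteq> 0"
    using assms(2) by (auto simp: fun_eq_iff)
  moreover have "\<not> 4 \<le> j"
    using assms(1) calculation by (auto simp: F2_4_def)
  ultimately show thesis
    using that by (simp add: not_le)
qed

section \<open>Levels of 6-subsets of F_2^4\<close>

definition shift_closed :: "bvec set \<Rightarrow> bvec \<Rightarrow> bool" where
  "shift_closed X t \<longleftrightarrow> (\<forall>z\<in>X. z + t \<in> X)"

definition sum_level :: "bvec set \<Rightarrow> nat" where
  "sum_level X = (if \<Sum>X = 0 then 0 else if shift_closed X (\<Sum>X) then 2 else 1)"

lemma sum_level_le_2: "sum_level X \<le> 2"
  by (simp add: sum_level_def)

lemma sum_exchange:
  assumes "finite X" "a \<in> X" "b \<notin> X"
  shows "\<Sum>(exchange X a b) = \<Sum>X + a + (b::bvec)"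
  using assms by (simp add: exchange_def sum_diff1 add_ac)

lemma sum_level_exchange_eq_0_iff:
  assumes "finite X" "a \<in> X" "b \<notin> X"
  shows "sum_level (exchange X a b) = 0 \<longleftrightarrow> b = a + \<Sum>X"
  unfolding sum_level_def sum_exchange[OF assms] by (simp add: bvec_normalise)

lemma shift_closed_insert_pair:
  assumes "a \<notin> P" "a + t \<notin> P"
  shows "shift_closed (insert a (insert (a + t) P)) t \<longleftrightarrow> shift_closed P t"
proof -
  have "z + t \<noteq> a" "z + t \<noteq> a + t" if "z \<in> P" for z
    using assms that by (metis bvec_add_self_left add.commute add.left_commute)+
  then show ?thesis
    unfolding shift_closed_def by (auto simp: add.assoc)
qed

lemma sum_level_exchange_eq_2_iff:
  assumes "finite X" "a \<in> X" "b \<notin> X"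
  shows "sum_level (exchange X a b) = 2 \<longleftrightarrow>
    a + \<Sum>X \<in> X - {a} \<and> \<Sum>X + a + b \<noteq> 0 \<and> shift_closed (X - {a, a + \<Sum>X}) (\<Sum>X + a + b)"
proof -
  define S where "S = \<Sum>X"
  define T where "T = S + a + b"
  have level_2_iff: "sum_level (exchange X a b) = 2 \<longleftrightarrow> T \<noteq> 0 \<and> shift_closed (exchange X a b) T"
    using sum_exchange[OF assms] by (simp add: sum_level_def S_def T_def)
  have bT: "b + T = a + S"
    by (simp add: T_def add_ac)
  show ?thesis
  proof (cases "a + S \<in> X - {a}")
    case True
    define P where "P = X - {a, a + S}"
    have "exchange X a b = insert b (insert (b + T) P)"
      using True bT by (auto simp: exchange_def P_def)
    moreover have "b \<notin> P" "b + T \<notin> P"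
      using assms(3) bT by (auto simp: P_def)
    ultimately have "sum_level (exchange X a b) = 2 \<longleftrightarrow> T \<noteq> 0 \<and> shift_closed P T"
      using level_2_iff shift_closed_insert_pair by simp
    then show ?thesis
      unfolding S_def [symmetric] T_def [symmetric] P_def [symmetric] using True by simp
  next
    case False
    have "\<not> (T \<noteq> 0 \<and> shift_closed (exchange X a b) T)"
    proof
      assume T: "T \<noteq> 0 \<and> shift_closed (exchange X a b) T"
      then have "b + T \<in> exchange X a b"
        unfolding shift_closed_def exchange_def by blast
      moreover have "b + T \<noteq> b"
        using T by (simp add: bvec_normalise)
      ultimately show False
        using False bT by (simp add: exchange_def)
    qed
    then show ?thesis
      unfolding S_def [symmetric] using level_2_iff False by blast
  qed
qed

lemma card_translations_four_set:
  assumes "card P = 4" "\<Sum>P = (0::bvec)"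
  shows "card {t. t \<noteq> 0 \<and> shift_closed P t} = 3"
proof -
  obtain p q r s where P: "P = {p, q, r, s}"
    and distinct: "p \<noteq> q" "p \<noteq> r" "p \<noteq> s" "q \<noteq> r" "q \<noteq> s" "r \<noteq> s"
    using assms(1) by (auto simp: card_Suc_eq numeral_eq_Suc)
  have "p + q + r + s = 0"
    using assms(2) distinct unfolding P by (simp add: add.assoc)
  then have s: "s = p + q + r"
    by (simp add: bvec_normalise)
  have "{t. t \<noteq> 0 \<and> shift_closed P t} = {p + q, p + r, q + r}"
    using distinct unfolding P s shift_closed_def by (auto simp: bvec_normalise)
  moreover have "card {p + q, p + r, q + r} = 3"
    using distinct by (simp add: bvec_normalise card_insert_if)
  ultimately show ?thesis
    by simp
qed

(* For S j = 1, the projection onto the hyperplane w j = 0 along S. *)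
definition project_along :: "bvec \<Rightarrow> nat \<Rightarrow> bvec \<Rightarrow> bvec" where
  "project_along S j w = w + (\<lambda>k. w j * S k)"

lemma project_along_mem_hyperplane:
  assumes "S \<in> F2_4" "S j = 1" "w \<in> F2_4"
  shows "project_along S j w \<in> {w \<in> F2_4. w j = 0}"
  using assms by (simp add: project_along_def F2_4_def)

lemma project_along_eq_imp:
  assumes "S j = 1" "project_along S j z = project_along S j z'"
  shows "z' = z \<or> z' = z + S"
proof -
  have diff: "z + z' = (\<lambda>k. (z j + z' j) * S k)"
  proof
    fix k
    have "z k + z j * S k = z' k + z' j * S k"
      using assms(2) unfolding project_along_def by (metis plus_fun_apply)
    then show "(z + z') k = (z j + z' j) * S k"
      by (cases "z k"; cases "z' k"; cases "z j"; cases "z' j"; cases "S k") simp_all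
  qed
  show ?thesis
  proof (cases "z j + z' j = 0")
    case True
    then have "z + z' = 0"
      using diff by (simp add: zero_fun_def)
    then show ?thesis
      by (simp add: bvec_add_eq_0_iff)
  next
    case False
    then have "z + z' = S"
      unfolding diff by (simp only: bit_not_zero_iff mult_1_left)
    then show ?thesis
      by (metis bvec_add_self_left)
  qed
qed

lemma sum_project_along:
  assumes "S = \<Sum>X" "S j = 1"
  shows "(\<Sum>z\<in>X. project_along S j z) = 0"
proof -
  have "(\<Sum>z\<in>X. project_along S j z) = S + (\<Sum>z\<in>X. (\<lambda>k. z j * S k))"
    unfolding project_along_def sum.distrib assms(1) by simp
  also have "(\<Sum>z\<in>X. (\<lambda>k. z j * S k)) = (\<lambda>k. (\<Sum>z\<in>X. z j) * S k)"
    by (rule ext) (simp only: sum_fun_apply sum_distrib_right)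
  also have "(\<Sum>z\<in>X. z j) = S j"
    unfolding assms(1) by (simp only: sum_fun_apply)
  finally show ?thesis
    using assms(2) by (simp only: mult_1_left bvec_add_self)
qed

lemma shift_pair_exists:
  assumes X: "X \<subseteq> F2_4" "card X = 6" and S: "\<Sum>X \<noteq> 0"
  shows "\<exists>z\<in>X. z + \<Sum>X \<in> X"
proof (rule ccontr)
  assume no_pair: "\<not> (\<exists>z\<in>X. z + \<Sum>X \<in> X)"
  define S where "S = \<Sum>X"
  have "S \<in> F2_4"
    unfolding S_def using X(1) by (rule F2_4_sum)
  then obtain j where j: "j < 4" "S j = 1"
    using S S_def F2_4_nonzero_coordinate by blast
  let ?p = "project_along S j" and ?H = "{w \<in> F2_4. w j = 0}"
  have inj: "inj_on ?p X"
  proof (rule inj_onI)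
    fix z z'
    assume "z \<in> X" "z' \<in> X" "?p z = ?p z'"
    then show "z = z'"
      using project_along_eq_imp[of S j z z'] j(2) no_pair by (auto simp: S_def)
  qed
  have "\<Sum>(?p ` X) = 0"
    using sum_project_along[OF S_def j(2)] sum.reindex[OF inj, of id] by simp
  moreover have "?p ` X \<subseteq> ?H"
    using project_along_mem_hyperplane[OF \<open>S \<in> F2_4\<close> j(2)] X(1) by auto
  moreover have "finite ?H"
    using F2_4_hyperplane(1)[OF j(1)] card_ge_0_finite[of ?H] by simp
  ultimately have "card (?H - ?p ` X) = 2" and "\<Sum>(?H - ?p ` X) = 0"
    using F2_4_hyperplane[OF j(1)] card_image[OF inj] X(2) sum_diff[of ?H "?p ` X" id]
    by (simp_all add: card_Diff_subset finite_subset)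
  then obtain d d' :: bvec where "d \<noteq> d'" "d + d' = 0"
    by (auto simp: card_2_iff)
  then show False
    by (simp add: bvec_add_eq_0_iff)
qed

lemma shift_closed_of_two_pairs:
  assumes X: "finite X" "card X = 6" and S: "S = \<Sum>X" "S \<noteq> 0"
    and A: "{u, u + S, p, p + S} \<subseteq> X" and new: "p \<notin> {u, u + S}"
  shows "shift_closed X S"
proof -
  let ?A = "{u, u + S, p, p + S}"
  have "card ?A = 4" "\<Sum>?A = 0"
    using new S(2) by (auto simp: bvec_normalise)
  then have "card (X - ?A) = 2"
    using X A by (simp add: card_Diff_subset finite_subset)
  then obtain d d' where dd': "X - ?A = {d, d'}" "d \<noteq> d'"
    by (auto simp: card_2_iff)
  have "\<Sum>X = \<Sum>(X - ?A) + \<Sum>?A"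
    using sum.subset_diff[OF A X(1), of id] by simp
  then have "S = d + d'"
    using S(1) \<open>\<Sum>?A = 0\<close> dd' by simp
  then have pair: "d + S = d'" "d' + S = d"
    by (simp_all add: bvec_normalise)
  show ?thesis
    unfolding shift_closed_def
  proof
    fix z
    assume z: "z \<in> X"
    show "z + S \<in> X"
    proof (cases "z \<in> ?A")
      case True
      then have "z + S \<in> ?A"
        by (auto simp: add.assoc)
      then show ?thesis
        using A by blast
    next
      case False
      then have "z = d \<or> z = d'"
        using z dd'(1) by blast
      then show ?thesis
        using pair dd'(1) by auto
    qed
  qed
qed

lemma card_shift_pairs_nonclosed:
  assumes X: "X \<subseteq> F2_4" "card X = 6" and S: "\<Sum>X \<noteq> 0"
    and not_closed: "\<not> shift_closed X (\<Sum>X)"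
  shows "card {z \<in> X. z + \<Sum>X \<in> X} = 2"
proof -
  define S where "S = \<Sum>X"
  define Q where "Q = {z \<in> X. z + S \<in> X}"
  have "finite X"
    using X(2) card_ge_0_finite[of X] by simp
  obtain u where u: "u \<in> Q"
    using shift_pair_exists[OF X S] by (auto simp: Q_def S_def)
  then have "u + S \<in> Q"
    by (simp add: Q_def add.assoc)
  have "Q \<subseteq> {u, u + S}"
  proof
    fix p
    assume "p \<in> Q"
    then show "p \<in> {u, u + S}"
      using shift_closed_of_two_pairs[OF \<open>finite X\<close> X(2) S_def] S u not_closed
      by (auto simp: Q_def S_def add.assoc)
  qed
  then have "Q = {u, u + S}"
    using u \<open>u + S \<in> Q\<close> by blast
  moreover have "u \<noteq> u + S"
    using S by (simp add: S_def bvec_normalise)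
  ultimately show ?thesis
    by (simp add: Q_def S_def)
qed

definition exchange_count :: "bvec set \<Rightarrow> bvec \<Rightarrow> nat \<Rightarrow> nat" where
  "exchange_count X a c = card {b \<in> F2_4 - X. sum_level (exchange X a b) = c}"

lemma exchange_count_0:
  assumes "X \<subseteq> F2_4" "finite X" "a \<in> X"
  shows "exchange_count X a 0 = (if a + \<Sum>X \<in> X then 0 else 1)"
proof -
  have "a + \<Sum>X \<in> F2_4"
    using assms F2_4_add F2_4_sum by blast
  then have "{b \<in> F2_4 - X. sum_level (exchange X a b) = 0} = {a + \<Sum>X} - X"
    using sum_level_exchange_eq_0_iff[OF assms(2,3)] by auto
  then show ?thesis
    by (simp add: exchange_count_def insert_Diff_if)
qed

lemma exchange_level_2_of_translation:
  assumes X: "X \<subseteq> F2_4" "finite X" and a: "a \<in> X" and pair: "a + \<Sum>X \<in> X - {a}"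
    and P: "X - {a, a + \<Sum>X} \<noteq> {}"
    and t: "t \<noteq> 0" "shift_closed (X - {a, a + \<Sum>X}) t" "t \<noteq> \<Sum>X"
  shows "\<Sum>X + a + t \<in> F2_4 - X \<and> sum_level (exchange X a (\<Sum>X + a + t)) = 2"
proof -
  define S where "S = \<Sum>X"
  define b where "b = S + a + t"
  let ?P = "X - {a, a + S}"
  obtain p where p: "p \<in> ?P"
    using P by (auto simp: S_def)
  then have "p + t \<in> ?P"
    using t(2) by (simp add: shift_closed_def S_def)
  have "b = S + a + p + (p + t)"
    by (simp add: b_def add_ac)
  moreover have "S \<in> F2_4" "a \<in> F2_4" "p \<in> F2_4" "p + t \<in> F2_4"
    using X(1) a p \<open>p + t \<in> ?P\<close> F2_4_sum[OF X(1)] by (auto simp: S_def)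
  ultimately have "b \<in> F2_4"
    by (simp only: F2_4_add)
  have "b \<notin> ?P"
  proof
    assume "b \<in> ?P"
    then have "b + t \<in> ?P"
      using t(2) by (simp add: shift_closed_def S_def)
    then show False
      by (simp add: b_def add_ac)
  qed
  moreover have "b \<noteq> a" "b \<noteq> a + S"
    using t(1,3) by (simp_all add: b_def S_def bvec_normalise)
  ultimately have "b \<notin> X"
    by blast
  moreover have "S + a + b = t"
    by (simp add: b_def add_ac)
  ultimately show ?thesis
    using \<open>b \<in> F2_4\<close> sum_level_exchange_eq_2_iff[OF X(2) a \<open>b \<notin> X\<close>] pair t
    by (simp add: S_def b_def)
qed

(* The exchanged-in point b is recovered from the new translation t = sum X + a + b; t = sum X
  would give b = a. *)
lemma exchanges_level_2_eq_image:
  assumes X: "X \<subseteq> F2_4" "finite X" and a: "a \<in> X" and pair: "a + \<Sum>X \<in> X - {a}"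
    and P: "X - {a, a + \<Sum>X} \<noteq> {}"
  shows "{b \<in> F2_4 - X. sum_level (exchange X a b) = 2}
       = (\<lambda>t. \<Sum>X + a + t) ` ({t. t \<noteq> 0 \<and> shift_closed (X - {a, a + \<Sum>X}) t} - {\<Sum>X})"
proof (intro equalityI subsetI)
  fix b
  assume "b \<in> {b \<in> F2_4 - X. sum_level (exchange X a b) = 2}"
  then have b: "b \<notin> X" "\<Sum>X + a + b \<noteq> 0" "shift_closed (X - {a, a + \<Sum>X}) (\<Sum>X + a + b)"
    using sum_level_exchange_eq_2_iff[OF X(2) a] by auto
  moreover have "a \<noteq> b"
    using a b(1) by blast
  then have "\<Sum>X + a + b \<noteq> \<Sum>X"
    by (simp add: add.assoc bvec_add_eq_0_iff)
  moreover have "b = \<Sum>X + a + (\<Sum>X + a + b)"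
    by (simp add: bvec_normalise)
  ultimately show "b \<in> (\<lambda>t. \<Sum>X + a + t) ` ({t. t \<noteq> 0 \<and> shift_closed (X - {a, a + \<Sum>X}) t} - {\<Sum>X})"
    by blast
next
  fix b
  assume "b \<in> (\<lambda>t. \<Sum>X + a + t) ` ({t. t \<noteq> 0 \<and> shift_closed (X - {a, a + \<Sum>X}) t} - {\<Sum>X})"
  then show "b \<in> {b \<in> F2_4 - X. sum_level (exchange X a b) = 2}"
    using exchange_level_2_of_translation[OF X a pair P] by auto
qed

lemma exchange_count_2:
  assumes X: "X \<subseteq> F2_4" "card X = 6" and a: "a \<in> X"
  shows "exchange_count X a 2 =
    (if a + \<Sum>X \<in> X - {a} then if shift_closed X (\<Sum>X) then 2 else 3 else 0)"
proof -
  define S where "S = \<Sum>X"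
  have "finite X"
    using X(2) card_ge_0_finite[of X] by simp
  show ?thesis
  proof (cases "a + S \<in> X - {a}")
    case False
    then have "{b \<in> F2_4 - X. sum_level (exchange X a b) = 2} = {}"
      using sum_level_exchange_eq_2_iff[OF \<open>finite X\<close> a] by (auto simp: S_def)
    then show ?thesis
      unfolding S_def [symmetric] by (simp only: exchange_count_def card.empty if_not_P[OF False])
  next
    case True
    define P where "P = X - {a, a + S}"
    have X_eq: "X = insert a (insert (a + S) P)" and notin: "a \<notin> P" "a + S \<notin> P"
      using True a by (auto simp: P_def)
    have "finite P"
      using \<open>finite X\<close> by (simp add: P_def)
    have "card P = 4"
      using X(2) \<open>finite P\<close> notin True unfolding X_eq by (auto simp: card_insert_if)
    have "S = a + (a + S + \<Sum>P)"
      unfolding S_def using \<open>finite P\<close> notin True by (subst (1) X_eq) (simp add: S_def [symmetric])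
    then have "\<Sum>P = 0"
      by (simp add: bvec_normalise)
    have "P \<noteq> {}"
      using \<open>card P = 4\<close> by auto
    have "card {t. t \<noteq> 0 \<and> shift_closed P t} = 3"
      using \<open>card P = 4\<close> \<open>\<Sum>P = 0\<close> by (rule card_translations_four_set)
    moreover have "shift_closed X S \<longleftrightarrow> shift_closed P S"
      unfolding X_eq using notin by (rule shift_closed_insert_pair)
    moreover have "inj_on (\<lambda>t. S + a + t) A" for A
      by (rule inj_onI) simp
    ultimately show ?thesis
      using exchanges_level_2_eq_image[OF X(1) \<open>finite X\<close> a] True \<open>P \<noteq> {}\<close>
      by (simp add: exchange_count_def card_image card_Diff_singleton_if S_def [symmetric] P_def)
  qed
qed

lemma card_fibres_le_2:
  assumes "finite B" "\<And>b. b \<in> B \<Longrightarrow> g b \<le> (2::nat)"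
  shows "card {b \<in> B. g b = 0} + card {b \<in> B. g b = 1} + card {b \<in> B. g b = 2} = card B"
proof -
  have "B = ({b \<in> B. g b = 0} \<union> {b \<in> B. g b = 1}) \<union> {b \<in> B. g b = 2}"
    using assms(2) by (auto simp: le_Suc_eq numeral_2_eq_2)
  also have "card \<dots> = card ({b \<in> B. g b = 0} \<union> {b \<in> B. g b = 1}) + card {b \<in> B. g b = 2}"
    using assms(1) by (intro card_Un_disjoint) auto
  also have "card ({b \<in> B. g b = 0} \<union> {b \<in> B. g b = 1}) = card {b \<in> B. g b = 0} + card {b \<in> B. g b = 1}"
    using assms(1) by (intro card_Un_disjoint) auto
  finally show ?thesis
    by simp
qed

lemma exchange_count_1:
  assumes X: "X \<subseteq> F2_4" "card X = 6"
  shows "exchange_count X a 1 = 10 - exchange_count X a 0 - exchange_count X a 2"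
proof -
  have "exchange_count X a 0 + exchange_count X a 1 + exchange_count X a 2 = card (F2_4 - X)"
    unfolding exchange_count_def by (rule card_fibres_le_2) (simp_all add: finite_F2_4 sum_level_le_2)
  moreover have "card (F2_4 - X) = 10"
    using X card_F2_4 finite_subset[OF X(1) finite_F2_4] by (simp add: card_Diff_subset)
  ultimately show ?thesis
    by linarith
qed

lemma exchange_count_gt_2:
  assumes "2 < c"
  shows "exchange_count X a c = 0"
proof -
  have "sum_level Y \<noteq> c" for Y
    using sum_level_le_2[of Y] assms by linarith
  then show ?thesis
    by (simp add: exchange_count_def)
qed

lemma sum_two_valued:
  assumes "finite X" "Q \<subseteq> X" "\<And>a. a \<in> Q \<Longrightarrow> f a = p" "\<And>a. a \<in> X - Q \<Longrightarrow> f a = q"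
  shows "(\<Sum>a\<in>X. f a) = card Q * p + card (X - Q) * (q::nat)"
proof -
  have "(\<Sum>a\<in>X. f a) = (\<Sum>a\<in>X - Q. f a) + (\<Sum>a\<in>Q. f a)"
    using sum.subset_diff[OF assms(2,1)] .
  also have "\<dots> = card (X - Q) * q + card Q * p"
    using assms(3,4) by simp
  finally show ?thesis
    by simp
qed

(* Entry (i, j): the number of neighbours of level j of a vertex of level i. *)
definition level_transitions :: "nat \<Rightarrow> nat \<Rightarrow> nat" where
  "level_transitions i j =
    (if i \<le> 2 \<and> j \<le> 2 then [[0, 60, 0], [4, 50, 6], [0, 48, 12]] ! i ! j else 0)"

lemma sum_exchange_count_zero_sum:
  assumes X: "X \<subseteq> F2_4" "card X = 6" and S: "\<Sum>X = 0" and "c \<le> 2"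
  shows "(\<Sum>a\<in>X. exchange_count X a c) = level_transitions 0 c"
proof -
  have "finite X"
    using X(2) card_ge_0_finite[of X] by simp
  then have "exchange_count X a 0 = 0" "exchange_count X a 1 = 10" "exchange_count X a 2 = 0"
    if "a \<in> X" for a
    using exchange_count_0[OF X(1) _ that] exchange_count_1[OF X] exchange_count_2[OF X that] S that
    by simp_all
  then show ?thesis
    using X(2) \<open>c \<le> 2\<close> by (auto simp: level_transitions_def le_Suc_eq numeral_2_eq_2)
qed

lemma sum_exchange_count_closed:
  assumes X: "X \<subseteq> F2_4" "card X = 6" and S: "\<Sum>X \<noteq> 0" "shift_closed X (\<Sum>X)" and "c \<le> 2"
  shows "(\<Sum>a\<in>X. exchange_count X a c) = level_transitions 2 c"
proof -
  have "finite X"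
    using X(2) card_ge_0_finite[of X] by simp
  have "a + \<Sum>X \<in> X - {a}" if "a \<in> X" for a
    using S that by (auto simp: shift_closed_def)
  then have "exchange_count X a 0 = 0" "exchange_count X a 1 = 8" "exchange_count X a 2 = 2"
    if "a \<in> X" for a
    using exchange_count_0[OF X(1) \<open>finite X\<close> that] exchange_count_1[OF X]
      exchange_count_2[OF X that] S that
    by simp_all
  then show ?thesis
    using X(2) \<open>c \<le> 2\<close> by (auto simp: level_transitions_def le_Suc_eq numeral_2_eq_2)
qed

lemma sum_exchange_count_nonclosed:
  assumes X: "X \<subseteq> F2_4" "card X = 6" and S: "\<Sum>X \<noteq> 0" "\<not> shift_closed X (\<Sum>X)"
    and "c \<le> 2"
  shows "(\<Sum>a\<in>X. exchange_count X a c) = level_transitions 1 c"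
proof -
  define Q where "Q = {a \<in> X. a + \<Sum>X \<in> X}"
  have "finite X"
    using X(2) card_ge_0_finite[of X] by simp
  have "Q \<subseteq> X" "card Q = 2"
    using card_shift_pairs_nonclosed[OF X S] by (auto simp: Q_def)
  then have "card (X - Q) = 4"
    using X(2) \<open>finite X\<close> by (simp add: card_Diff_subset finite_subset)
  have in_Q: "exchange_count X a 0 = 0" "exchange_count X a 1 = 7" "exchange_count X a 2 = 3"
    if "a \<in> Q" for a
    using exchange_count_0[OF X(1) \<open>finite X\<close>] exchange_count_1[OF X]
      exchange_count_2[OF X] S that
    by (auto simp: Q_def)
  have off_Q: "exchange_count X a 0 = 1" "exchange_count X a 1 = 9" "exchange_count X a 2 = 0"
    if "a \<in> X - Q" for a
    using exchange_count_0[OF X(1) \<open>finite X\<close>] exchange_count_1[OF X]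
      exchange_count_2[OF X] that
    by (auto simp: Q_def)
  have "(\<Sum>a\<in>X. exchange_count X a 0) = card Q * 0 + card (X - Q) * 1"
    "(\<Sum>a\<in>X. exchange_count X a 1) = card Q * 7 + card (X - Q) * 9"
    "(\<Sum>a\<in>X. exchange_count X a 2) = card Q * 3 + card (X - Q) * 0"
    by (rule sum_two_valued[OF \<open>finite X\<close> \<open>Q \<subseteq> X\<close>]; use in_Q off_Q in blast)+
  then show ?thesis
    using \<open>c \<le> 2\<close> \<open>card Q = 2\<close> \<open>card (X - Q) = 4\<close>
    by (auto simp: level_transitions_def le_Suc_eq numeral_2_eq_2)
qed

lemma card_exchanges_by_level:
  assumes X: "X \<subseteq> F2_4" "card X = 6"
  shows "card {(a, b) \<in> X \<times> (F2_4 - X). sum_level (exchange X a b) = c}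
       = level_transitions (sum_level X) c"
proof -
  have "finite X"
    using X(2) card_ge_0_finite[of X] by simp
  have "{(a, b) \<in> X \<times> (F2_4 - X). sum_level (exchange X a b) = c}
      = Sigma X (\<lambda>a. {b \<in> F2_4 - X. sum_level (exchange X a b) = c})"
    by auto
  then have total: "card {(a, b) \<in> X \<times> (F2_4 - X). sum_level (exchange X a b) = c}
      = (\<Sum>a\<in>X. exchange_count X a c)"
    using \<open>finite X\<close> finite_F2_4 by (simp add: card_SigmaI exchange_count_def)
  show ?thesis
  proof (cases "c \<le> 2")
    case True
    then show ?thesis
      unfolding total
      using sum_exchange_count_zero_sum[OF X] sum_exchange_count_closed[OF X]
        sum_exchange_count_nonclosed[OF X]
      by (simp add: sum_level_def)
  next
    case False
    then show ?thesis
      unfolding total by (simp add: exchange_count_gt_2 level_transitions_def)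
  qed
qed

section \<open>The code in the Johnson graph J(16,6)\<close>

definition vertex_level :: "nat set \<Rightarrow> nat" where
  "vertex_level x = sum_level (binary_vec ` x)"

lemma binary_vec_image_johnson_vertex:
  assumes "x \<in> johnson_vertices 16 6"
  shows "binary_vec ` x \<subseteq> F2_4" "card (binary_vec ` x) = 6"
proof -
  have "x \<subseteq> {1..16}" "card x = 6"
    using assms by (auto simp: johnson_vertices_def)
  then show "binary_vec ` x \<subseteq> F2_4" "card (binary_vec ` x) = 6"
    using bij_betw_binary_vec inj_on_subset[OF bij_betw_imp_inj_on[OF bij_betw_binary_vec]]
    by (auto simp: bij_betw_def card_image)
qed

lemma card_neighbours_by_level:
  assumes x: "x \<in> johnson_vertices 16 6"
  shows "card {y \<in> johnson_vertices 16 6. johnson_adj 16 6 x y \<and> vertex_level y = c}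
       = level_transitions (vertex_level x) c"
proof -
  have "x \<subseteq> {1..16}"
    using x by (simp add: johnson_vertices_def)
  then show ?thesis
    using card_johnson_neighbours[OF x, of "\<lambda>y. vertex_level y = c"]
      card_exchanges_transfer[OF bij_betw_binary_vec, of x "\<lambda>Y. sum_level Y = c"]
      card_exchanges_by_level[OF binary_vec_image_johnson_vertex[OF x]]
    by (simp add: vertex_level_def)
qed

lemma weight6_supports_eq_level_0:
  "weight6_supports = {x \<in> johnson_vertices 16 6. vertex_level x = 0}"
proof -
  have "(\<Sum>i\<in>x. binary_vec i) = \<Sum>(binary_vec ` x)" if "x \<in> johnson_vertices 16 6" for x
    using that inj_on_subset[OF bij_betw_imp_inj_on[OF bij_betw_binary_vec]]
    by (simp add: johnson_vertices_def sum.reindex)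
  then show ?thesis
    unfolding weight6_supports_eq vertex_level_def sum_level_def by auto
qed

lemma neighbour_of_level_iff:
  assumes "x \<in> johnson_vertices 16 6"
  shows "(\<exists>y. johnson_adj 16 6 x y \<and> vertex_level y = c) \<longleftrightarrow>
    0 < level_transitions (vertex_level x) c"
proof -
  let ?N = "{y \<in> johnson_vertices 16 6. johnson_adj 16 6 x y \<and> vertex_level y = c}"
  have "(\<exists>y. johnson_adj 16 6 x y \<and> vertex_level y = c) \<longleftrightarrow> ?N \<noteq> {}"
    unfolding johnson_adj_def by blast
  also have "\<dots> \<longleftrightarrow> 0 < card ?N"
    using finite_johnson_vertices[of 16 6] by (simp add: card_gt_0_iff)
  finally show ?thesis
    unfolding card_neighbours_by_level[OF assms] .
qed

lemma level_transitions_pos_imp: "0 < level_transitions i j \<Longrightarrow> i \<le> Suc j"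
  by (auto simp: level_transitions_def le_Suc_eq numeral_2_eq_2 split: if_splits)

lemma level_transitions_down: "0 < i \<Longrightarrow> i \<le> 2 \<Longrightarrow> 0 < level_transitions i (i - 1)"
  by (auto simp: level_transitions_def le_Suc_eq numeral_2_eq_2)

lemma johnson_adj_vertex_level_le:
  assumes "johnson_adj 16 6 x y"
  shows "vertex_level x \<le> Suc (vertex_level y)"
  using assms neighbour_of_level_iff[of x "vertex_level y"] level_transitions_pos_imp
  by (auto simp: johnson_adj_def)

lemma vertex_level_descent:
  assumes x: "x \<in> johnson_vertices 16 6" and pos: "0 < vertex_level x"
  shows "\<exists>y. johnson_adj 16 6 x y \<and> Suc (vertex_level y) = vertex_level x"
proof -
  have "vertex_level x \<le> 2"
    by (simp add: vertex_level_def sum_level_le_2)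
  then obtain y where "johnson_adj 16 6 x y" "vertex_level y = vertex_level x - 1"
    using neighbour_of_level_iff[OF x] level_transitions_down[OF pos] by blast
  then show ?thesis
    using pos by auto
qed

lemma set_dist_weight6_supports:
  assumes "x \<in> johnson_vertices 16 6"
  shows "set_dist (johnson_adj 16 6) weight6_supports x = vertex_level x"
  unfolding weight6_supports_eq_level_0
  using johnson_adj_imp_vertex johnson_adj_vertex_level_le vertex_level_descent assms
  by (rule set_dist_eq_level)

lemma exists_vertex_level_0: "\<exists>c \<in> johnson_vertices 16 6. vertex_level c = 0"
proof -
  have "{1..6} \<in> johnson_vertices 16 6"
    by (simp add: johnson_vertices_def)
  then show ?thesis
    using walk_to_level_0[of "johnson_adj 16 6" "johnson_vertices 16 6" vertex_level]
      johnson_adj_imp_vertex vertex_level_descent by blast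
qed

lemma exists_vertex_level_2: "\<exists>z \<in> johnson_vertices 16 6. vertex_level z = 2"
proof -
  obtain c where "c \<in> johnson_vertices 16 6" "vertex_level c = 0"
    using exists_vertex_level_0 by blast
  then obtain y where "johnson_adj 16 6 c y" "vertex_level y = 1"
    using neighbour_of_level_iff[of c 1] by (auto simp: level_transitions_def)
  then obtain z where "johnson_adj 16 6 y z" "vertex_level z = 2"
    using neighbour_of_level_iff[of y 2] johnson_adj_imp_vertex by (auto simp: level_transitions_def)
  then show ?thesis
    using johnson_adj_imp_vertex by blast
qed

theorem corollary5p2:
  shows "completely_regular (johnson_vertices 16 6) (johnson_adj 16 6) weight6_supports \<and>
         covering_radius (johnson_vertices 16 6) (johnson_adj 16 6) weight6_supports = 2"
proof
  show "completely_regular (johnson_vertices 16 6) (johnson_adj 16 6) weight6_supports"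
  proof (rule completely_regular_by_level[where f = vertex_level and T = level_transitions])
    show "weight6_supports \<noteq> {}" "weight6_supports \<subseteq> johnson_vertices 16 6"
      using exists_vertex_level_0 by (auto simp: weight6_supports_eq_level_0)
  qed (simp_all add: set_dist_weight6_supports card_neighbours_by_level)
  show "covering_radius (johnson_vertices 16 6) (johnson_adj 16 6) weight6_supports = 2"
    using exists_vertex_level_2 set_dist_weight6_supports
    by (auto intro: covering_radius_by_level[where f = vertex_level]
        simp: vertex_level_def sum_level_le_2)
qed

end
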